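(* Let $Y,\widehat{Y},A$ be $\{0,1\}$-valued random variables on a common probability space, with $\Pr\{A=a,Y=y\}>0$ for all $a,y\in\{0,1\}$. For $a\in\{0,1\}$ let $P_a(\widehat{Y})=\mathrm{convhull}\{(0,0),\gamma_a(\widehat{Y}),\gamma_a(1-\widehat{Y}),(1,1)\}\subseteq\mathbb{R}^2$. Then: (i) every predictor $\widetilde{Y}$ derived from $(\widehat{Y},A)$ satisfies $\gamma_a(\widetilde{Y})\in P_a(\widehat{Y})$ for all $a\in\{0,1\}$; and (ii) conversely, for any points $g_0\in P_0(\widehat{Y})$ and $g_1\in P_1(\widehat{Y})$ there exists a predictor $\widetilde{Y}$ derived from $(\widehat{Y},A)$ with $\gamma_0(\widetilde{Y})=g_0$ and $\gamma_1(\widetilde{Y})=g_1$.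
   Context: For a $\{0,1\}$-valued predictor $Z$ and $a\in\{0,1\}$, $\gamma_a(Z)=\left(\Pr\{Z=1\mid A=a,Y=0\},\ \Pr\{Z=1\mid A=a,Y=1\}\right)$ (false positive rate and true positive rate within the group $A=a$). A predictor $\widetilde{Y}\in\{0,1\}$ is derived from $(\widehat{Y},A)$ if it is a possibly randomized function of $(\widehat{Y},A)$ alone, with the randomization independent of everything else; equivalently it is specified by the four numbers $\Pr\{\widetilde{Y}=1\mid \widehat{Y}=\hat y,A=a\}\in[0,1]$, $\hat y,a\in\{0,1\}$. *)

theory Defs
  imports "HOL-Analysis.Analysis" "HOL-Probability.Probability"
begin

text \<open>Values in {0,1} are encoded as bool (True = 1). The joint law of the
  triple (A, Y, Yhat) is a pmf on bool \<times> bool \<times> bool.\<close>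

definition cond_prob :: "'w pmf \<Rightarrow> ('w \<Rightarrow> bool) \<Rightarrow> ('w \<Rightarrow> bool) \<Rightarrow> real" where
  "cond_prob M P Q =
     measure_pmf.prob M {w. P w \<and> Q w} / measure_pmf.prob M {w. Q w}"

definition gamma :: "'w pmf \<Rightarrow> ('w \<Rightarrow> bool) \<Rightarrow> ('w \<Rightarrow> bool) \<Rightarrow> ('w \<Rightarrow> bool) \<Rightarrow> bool \<Rightarrow> real \<times> real" where
  "gamma M A Y Z a =
     (cond_prob M Z (\<lambda>w. A w = a \<and> \<not> Y w), cond_prob M Z (\<lambda>w. A w = a \<and> Y w))"

definition varA :: "bool \<times> bool \<times> bool \<Rightarrow> bool" where "varA w = fst w"
definition varY :: "bool \<times> bool \<times> bool \<Rightarrow> bool" where "varY w = fst (snd w)"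
definition varYh :: "bool \<times> bool \<times> bool \<Rightarrow> bool" where "varYh w = snd (snd w)"

text \<open>A derived predictor is given by t yh a = Pr{Ytilde=1 | Yhat=yh, A=a}, with
  independent randomization. Its joint law with (A, Y, Yhat) is the following pmf
  on quadruples (A, Y, Yhat, Ytilde).\<close>
definition derived_joint :: "(bool \<times> bool \<times> bool) pmf \<Rightarrow> (bool \<Rightarrow> bool \<Rightarrow> real)
     \<Rightarrow> (bool \<times> bool \<times> bool \<times> bool) pmf" where
  "derived_joint p t =
     bind_pmf p (\<lambda>(a, y, yh). map_pmf (\<lambda>z. (a, y, yh, z)) (bernoulli_pmf (t yh a)))"

definition dA :: "bool \<times> bool \<times> bool \<times> bool \<Rightarrow> bool" where "dA w = fst w"
definition dY :: "bool \<times> bool \<times> bool \<times> bool \<Rightarrow> bool" where "dY w = fst (snd w)"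
definition dYt :: "bool \<times> bool \<times> bool \<times> bool \<Rightarrow> bool" where "dYt w = snd (snd (snd w))"

definition polyP :: "(bool \<times> bool \<times> bool) pmf \<Rightarrow> bool \<Rightarrow> (real \<times> real) set" where
  "polyP p a = convex hull {(0, 0), gamma p varA varY varYh a,
                            gamma p varA varY (\<lambda>w. \<not> varYh w) a, (1, 1)}"

end

theory Submission
  imports Defs
begin

text \<open>Within the group A = a the derived predictor outputs 1 with probability t(1, a) when
  Yhat = 1 and t(0, a) when Yhat = 0, independently of Y; so its rates are
  gamma_a(Ytilde) = t(1, a) gamma_a(Yhat) + t(0, a) gamma_a(1 - Yhat), and (t(0, a), t(1, a)) ranges
  over the unit square independently for the two groups. Since gamma_a(Yhat) + gamma_a(1 - Yhat) = (1, 1),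
  the points (0, 0), gamma_a(Yhat), gamma_a(1 - Yhat), (1, 1) span a parallelogram, and P_a(Yhat) is
  exactly the image of the unit square under (s, r) \<mapsto> s gamma_a(Yhat) + r gamma_a(1 - Yhat).\<close>

lemma pmf_derived_joint:
  assumes "0 \<le> t yh a" "t yh a \<le> 1"
  shows "pmf (derived_joint p t) (a, y, yh, z) = pmf p (a, y, yh) * (if z then t yh a else 1 - t yh a)"
proof -
  have fiber: "pmf (case w of (a', y', yh') \<Rightarrow> map_pmf (\<lambda>z. (a', y', yh', z)) (bernoulli_pmf (t yh' a')))
        (a, y, yh, z) * pmf p w =
      (if w = (a, y, yh) then pmf (bernoulli_pmf (t yh a)) z * pmf p w else 0)" for w
  proof (cases "w = (a, y, yh)")
    case True
    have "pmf (map_pmf (\<lambda>z. (a, y, yh, z)) (bernoulli_pmf (t yh a))) (a, y, yh, z) =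
        pmf (bernoulli_pmf (t yh a)) z"
      by (rule pmf_map_inj') (simp add: inj_def)
    with True show ?thesis by simp
  qed (auto intro!: pmf_map_outside split: prod.split)
  have "pmf (derived_joint p t) (a, y, yh, z) =
      (\<Sum>w\<in>UNIV. if w = (a, y, yh) then pmf (bernoulli_pmf (t yh a)) z * pmf p w else 0)"
    unfolding derived_joint_def pmf_bind
    by (subst integral_measure_pmf_real[where A = UNIV]) (simp_all only: fiber UNIV_I finite)
  then show ?thesis
    using assms by (simp add: mult.commute)
qed

lemma convex_hull_parallelogram:
  fixes G H :: "'a::real_vector"
  shows "convex hull {0, G, H, G + H} = {s *\<^sub>R G + r *\<^sub>R H | s r. s \<in> {0..1} \<and> r \<in> {0..1}}"
    (is "_ = ?Q")
proof
  have "convex ?Q"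
  proof (rule convexI)
    fix a b and u v :: real
    assume "a \<in> ?Q" "b \<in> ?Q" and uv: "0 \<le> u" "0 \<le> v" "u + v = 1"
    then obtain s r s' r' where sr: "s \<in> {0..1}" "r \<in> {0..1}" "s' \<in> {0..1}" "r' \<in> {0..1}"
      and ab: "a = s *\<^sub>R G + r *\<^sub>R H" "b = s' *\<^sub>R G + r' *\<^sub>R H" by blast
    have "u *\<^sub>R a + v *\<^sub>R b = (u * s + v * s') *\<^sub>R G + (u * r + v * r') *\<^sub>R H"
      by (simp add: ab algebra_simps)
    moreover have "u * s + v * s' \<in> {0..1}" "u * r + v * r' \<in> {0..1}"
      using sr uv by (auto intro: convex_bound_le)
    ultimately show "u *\<^sub>R a + v *\<^sub>R b \<in> ?Q" by blast
  qed
  moreover have "{0, G, H, G + H} \<subseteq> ?Q"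
  proof -
    have "0 = 0 *\<^sub>R G + 0 *\<^sub>R H" "G = 1 *\<^sub>R G + 0 *\<^sub>R H"
      "H = 0 *\<^sub>R G + 1 *\<^sub>R H" "G + H = 1 *\<^sub>R G + 1 *\<^sub>R H"
      by simp_all
    then show ?thesis by fastforce
  qed
  ultimately show "convex hull {0, G, H, G + H} \<subseteq> ?Q"
    by (simp add: hull_minimal)
next
  show "?Q \<subseteq> convex hull {0, G, H, G + H}"
  proof
    fix x assume "x \<in> ?Q"
    then obtain s r where s: "0 \<le> s" "s \<le> 1" and r: "0 \<le> r" "r \<le> 1"
      and x: "x = s *\<^sub>R G + r *\<^sub>R H" by auto
    \<comment> \<open>The parallelogram is the union of the triangles {0, G, G + H} and {0, H, G + H}.\<close>
    show "x \<in> convex hull {0, G, H, G + H}"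
    proof (cases "r \<le> s")
      case True
      have "x = (1 - s) *\<^sub>R 0 + (s - r) *\<^sub>R G + r *\<^sub>R (G + H)"
        by (simp add: x algebra_simps)
      then have "x \<in> convex hull {0, G, G + H}"
        unfolding convex_hull_3
        by (intro CollectI exI[of _ "1 - s"] exI[of _ "s - r"] exI[of _ r]) (use s r True in auto)
      then show ?thesis by (rule rev_subsetD) (rule hull_mono, auto)
    next
      case False
      have "x = (1 - r) *\<^sub>R 0 + (r - s) *\<^sub>R H + s *\<^sub>R (G + H)"
        by (simp add: x algebra_simps)
      then have "x \<in> convex hull {0, H, G + H}"
        unfolding convex_hull_3
        by (intro CollectI exI[of _ "1 - r"] exI[of _ "r - s"] exI[of _ s]) (use s r False in auto)
      then show ?thesis by (rule rev_subsetD) (rule hull_mono, auto)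
    qed
  qed
qed

lemma prob_cell:
  "measure_pmf.prob p {w. varA w = a \<and> varY w = y} = pmf p (a, y, True) + pmf p (a, y, False)"
proof -
  have "{w. varA w = a \<and> varY w = y} = {(a, y, True), (a, y, False)}"
    by (auto simp: varA_def varY_def)
  then show ?thesis
    by (simp add: measure_measure_pmf_finite)
qed

lemma cond_prob_varYh:
  "cond_prob p (\<lambda>w. varYh w = b) (\<lambda>w. varA w = a \<and> varY w = y) =
     pmf p (a, y, b) / measure_pmf.prob p {w. varA w = a \<and> varY w = y}"
proof -
  have "{w. varYh w = b \<and> varA w = a \<and> varY w = y} = {(a, y, b)}"
    by (auto simp: varA_def varY_def varYh_def)
  then show ?thesis
    by (simp add: cond_prob_def measure_pmf_single)
qed

lemma cond_prob_derived_joint: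
  assumes "\<And>yh. 0 \<le> t yh a \<and> t yh a \<le> 1"
  shows "cond_prob (derived_joint p t) dYt (\<lambda>w. dA w = a \<and> dY w = y) =
     (t True a * pmf p (a, y, True) + t False a * pmf p (a, y, False)) /
     measure_pmf.prob p {w. varA w = a \<and> varY w = y}"
proof -
  have "{w. dYt w \<and> dA w = a \<and> dY w = y} = {(a, y, True, True), (a, y, False, True)}"
    by (auto simp: dA_def dY_def dYt_def)
  moreover have "{w. dA w = a \<and> dY w = y} =
      {(a, y, True, True), (a, y, False, True), (a, y, True, False), (a, y, False, False)}"
    by (auto simp: dA_def dY_def dYt_def)
  ultimately show ?thesis
    using assms
    by (simp add: cond_prob_def prob_cell measure_measure_pmf_finite pmf_derived_joint algebra_simps)
qed

lemma gamma_derived_joint: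
  assumes "\<And>yh. 0 \<le> t yh a \<and> t yh a \<le> 1"
  shows "gamma (derived_joint p t) dA dY dYt a =
     t True a *\<^sub>R gamma p varA varY varYh a + t False a *\<^sub>R gamma p varA varY (\<lambda>w. \<not> varYh w) a"
  using cond_prob_derived_joint[of t a p False] cond_prob_derived_joint[of t a p True] assms
    cond_prob_varYh[of p True a False] cond_prob_varYh[of p True a True]
    cond_prob_varYh[of p False a False] cond_prob_varYh[of p False a True]
  by (simp add: gamma_def add_divide_distrib)

lemma gamma_varYh_add_complement:
  assumes "\<And>y. measure_pmf.prob p {w. varA w = a \<and> varY w = y} > 0"
  shows "gamma p varA varY varYh a + gamma p varA varY (\<lambda>w. \<not> varYh w) a = (1, 1)"
  using cond_prob_varYh[of p True a False] cond_prob_varYh[of p True a True]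
    cond_prob_varYh[of p False a False] cond_prob_varYh[of p False a True]
    prob_cell[of p a False] prob_cell[of p a True] assms[of False] assms[of True]
  by (simp add: gamma_def add_divide_distrib[symmetric])

lemma polyP_eq_parallelogram:
  assumes "\<And>y. measure_pmf.prob p {w. varA w = a \<and> varY w = y} > 0"
  shows "polyP p a = {s *\<^sub>R gamma p varA varY varYh a + r *\<^sub>R gamma p varA varY (\<lambda>w. \<not> varYh w) a
                      | s r. s \<in> {0..1} \<and> r \<in> {0..1}}"
proof -
  have "polyP p a = convex hull {0, gamma p varA varY varYh a, gamma p varA varY (\<lambda>w. \<not> varYh w) a,
      gamma p varA varY varYh a + gamma p varA varY (\<lambda>w. \<not> varYh w) a}"
    by (simp add: polyP_def gamma_varYh_add_complement[OF assms] zero_prod_def)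
  then show ?thesis
    by (simp only: convex_hull_parallelogram)
qed

theorem lemma4p3:
  fixes p :: "(bool \<times> bool \<times> bool) pmf"
  assumes pos: "\<And>a y. measure_pmf.prob p {w. varA w = a \<and> varY w = y} > 0"
  shows "(\<forall>t. (\<forall>yh a. 0 \<le> t yh a \<and> t yh a \<le> 1) \<longrightarrow>
            (\<forall>a. gamma (derived_joint p t) dA dY dYt a \<in> polyP p a))
       \<and> (\<forall>g0 g1. g0 \<in> polyP p False \<and> g1 \<in> polyP p True \<longrightarrow>
            (\<exists>t. (\<forall>yh a. 0 \<le> t yh a \<and> t yh a \<le> 1) \<and>
                 gamma (derived_joint p t) dA dY dYt False = g0 \<and>
                 gamma (derived_joint p t) dA dY dYt True = g1))"
proof (intro conjI allI impI)
  fix t :: "bool \<Rightarrow> bool \<Rightarrow> real" and a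
  assume "\<forall>yh a. 0 \<le> t yh a \<and> t yh a \<le> 1"
  then show "gamma (derived_joint p t) dA dY dYt a \<in> polyP p a"
    by (auto simp: polyP_eq_parallelogram pos gamma_derived_joint)
next
  fix g0 g1
  assume "g0 \<in> polyP p False \<and> g1 \<in> polyP p True"
  then have "\<forall>a. \<exists>s r. s \<in> {0..1} \<and> r \<in> {0..1} \<and>
      (if a then g1 else g0) = s *\<^sub>R gamma p varA varY varYh a + r *\<^sub>R gamma p varA varY (\<lambda>w. \<not> varYh w) a"
    using polyP_eq_parallelogram[OF pos] by auto
  then obtain s r where sr: "\<And>a. s a \<in> {0..1} \<and> r a \<in> {0..1} \<and>
      (if a then g1 else g0) = s a *\<^sub>R gamma p varA varY varYh a + r a *\<^sub>R gamma p varA varY (\<lambda>w. \<not> varYh w) a"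
    by metis
  define t where "t yh a = (if yh then s a else r a)" for yh a
  have t: "\<And>yh a. 0 \<le> t yh a \<and> t yh a \<le> 1"
    using sr by (simp add: t_def)
  have "gamma (derived_joint p t) dA dY dYt a = (if a then g1 else g0)" for a
    using sr[of a] by (simp add: gamma_derived_joint t t_def)
  with t show "\<exists>t. (\<forall>yh a. 0 \<le> t yh a \<and> t yh a \<le> 1) \<and>
      gamma (derived_joint p t) dA dY dYt False = g0 \<and> gamma (derived_joint p t) dA dY dYt True = g1"
    by (metis (full_types))
qed

end
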